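(* Let $s\ge 0$ and $\Gamma_1,\Gamma_2\subseteq\{0,1\}^\infty$. If a learning function $l_1$ $s$-learns every $X\in\Gamma_1$ and a learning function $l_2$ $s$-learns every $X\in\Gamma_2$, then there exists a learning function $l_3$ that $s$-learns every $X\in\Gamma_1\cup\Gamma_2$.
   Context: A learning function is a function $l:\{0,1\}^*\to\{0,1\}$ (identifying yes with $1$ and no with $0$). $Y\upharpoonright i$ is the length-$i$ prefix of $Y$; $\lambda$ is the uniform (Lebesgue) measure on $\{0,1\}^\infty$. For a nonempty string $w$, the path average is $\mathrm{AVG}_l(w)=\frac{1}{|w|}\sum_{i=0}^{|w|} l(w\upharpoonright i)$. A learning function $l$ satisfies the measure condition if for all $n\in\mathbb N$, $\lambda(\{Y\in\{0,1\}^\infty : \#\{i\in\mathbb N: l(Y\upharpoonright i)=1\}\ge n\})\le 2^{-n}$. For $s\ge0$, $l$ $s$-learns $X$ iff $l$ satisfies the measure condition and $\limsup_{n\to\infty}\mathrm{AVG}_l(X\upharpoonright n)\ge 1-s$ (no computability restriction on $l$). *)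

theory Defs
  imports "HOL-Probability.Probability"
begin

text \<open>Infinite binary sequences are modelled as nat => bool, finite strings as bool list,
  with True = 1 and False = 0.\<close>

type_synonym learning_function = "bool list \<Rightarrow> bool"

definition pref :: "(nat \<Rightarrow> bool) \<Rightarrow> nat \<Rightarrow> bool list" where
  "pref Y i = map Y [0..<i]"

definition lam :: "(nat \<Rightarrow> bool) measure" where
  "lam = (\<Pi>\<^sub>M i\<in>(UNIV::nat set). measure_pmf (bernoulli_pmf (1/2)))"

definition AVG :: "learning_function \<Rightarrow> bool list \<Rightarrow> real" where
  "AVG l w = (1 / real (length w)) * (\<Sum>i=0..length w. if l (take i w) then 1 else 0)"

definition yes_set :: "learning_function \<Rightarrow> (nat \<Rightarrow> bool) \<Rightarrow> nat set" where
  "yes_set l Y = {i. l (pref Y i)}"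

definition measure_condition :: "learning_function \<Rightarrow> bool" where
  "measure_condition l \<longleftrightarrow>
     (\<forall>n::nat. emeasure lam {Y \<in> space lam. infinite (yes_set l Y) \<or> n \<le> card (yes_set l Y)}
                \<le> ennreal ((1/2) ^ n))"

definition s_learns :: "real \<Rightarrow> learning_function \<Rightarrow> (nat \<Rightarrow> bool) \<Rightarrow> bool" where
  "s_learns s l X \<longleftrightarrow> measure_condition l \<and>
     limsup (\<lambda>n. ereal (AVG l (pref X n))) \<ge> ereal (1 - s)"

end

theory Submission
  imports Defs
begin

text \<open>Let the merged learner answer yes exactly when the larger of the two running yes-counts
  reaches a new value \<open>k \<ge> 2\<close>. Its yes-count is then that maximum minus one, so on every prefix
  its average is at least either component's average minus \<open>1/n\<close>, which leaves the limsup
  unchanged. Conversely, \<open>n \<ge> 1\<close> merged yeses on a sequence force \<open>n + 1\<close> yeses of one of the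
  components, an event of measure at most \<open>2 \<cdot> (1/2)^(n+1) = (1/2)^n\<close>.\<close>

definition yes_count :: "learning_function \<Rightarrow> bool list \<Rightarrow> nat" where
  "yes_count l w = card {i. i \<le> length w \<and> l (take i w)}"

definition max_yes_count :: "learning_function \<Rightarrow> learning_function \<Rightarrow> bool list \<Rightarrow> nat" where
  "max_yes_count l1 l2 w = max (yes_count l1 w) (yes_count l2 w)"

definition merge_learners :: "learning_function \<Rightarrow> learning_function \<Rightarrow> learning_function" where
  "merge_learners l1 l2 w \<longleftrightarrow>
     2 \<le> max_yes_count l1 l2 w \<and> max_yes_count l1 l2 (butlast w) < max_yes_count l1 l2 w"

definition many_yes :: "learning_function \<Rightarrow> nat \<Rightarrow> (nat \<Rightarrow> bool) set" where
  "many_yes l n = {Y \<in> space lam. infinite (yes_set l Y) \<or> n \<le> card (yes_set l Y)}"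

lemma measure_condition_iff_many_yes:
  "measure_condition l \<longleftrightarrow> (\<forall>n. emeasure lam (many_yes l n) \<le> ennreal ((1/2) ^ n))"
  by (simp add: measure_condition_def many_yes_def)

lemma yes_count_Nil: "yes_count l [] = (if l [] then 1 else 0)"
proof -
  have "{i. i \<le> 0 \<and> l (take i [])} = (if l [] then {0} else {})" by auto
  then show ?thesis unfolding yes_count_def by simp
qed

lemma yes_count_snoc: "yes_count l (w @ [a]) = yes_count l w + (if l (w @ [a]) then 1 else 0)"
proof -
  have "{i. i \<le> length (w @ [a]) \<and> l (take i (w @ [a]))} =
        {i. i \<le> length w \<and> l (take i w)} \<union> (if l (w @ [a]) then {Suc (length w)} else {})"
    by (auto simp: le_Suc_eq)
  then show ?thesis unfolding yes_count_def by auto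
qed

lemma yes_count_merge_learners:
  "yes_count (merge_learners l1 l2) w = max_yes_count l1 l2 w - 1"
proof (induction w rule: rev_induct)
  case Nil
  then show ?case by (simp add: yes_count_Nil max_yes_count_def merge_learners_def)
next
  case (snoc a w)
  have "max_yes_count l1 l2 w \<le> max_yes_count l1 l2 (w @ [a])"
       "max_yes_count l1 l2 (w @ [a]) \<le> max_yes_count l1 l2 w + 1"
    by (auto simp: max_yes_count_def yes_count_snoc)
  then show ?case using snoc by (auto simp: yes_count_snoc merge_learners_def)
qed

lemma AVG_eq_yes_count: "AVG l w = real (yes_count l w) / real (length w)"
proof -
  have "{0..length w} \<inter> {i. l (take i w)} = {i. i \<le> length w \<and> l (take i w)}" by auto
  then have "(\<Sum>i=0..length w. if l (take i w) then 1 else 0) = real (yes_count l w)"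
    by (simp add: sum.If_cases yes_count_def)
  then show ?thesis unfolding AVG_def by simp
qed

lemma AVG_le_AVG_merge_learners:
  assumes "l = l1 \<or> l = l2"
  shows "AVG l w \<le> AVG (merge_learners l1 l2) w + 1 / real (length w)"
proof -
  have "real (yes_count l w) \<le> real (yes_count (merge_learners l1 l2) w) + 1"
    using assms by (auto simp: yes_count_merge_learners max_yes_count_def)
  then show ?thesis
    unfolding AVG_eq_yes_count add_divide_distrib[symmetric] by (rule divide_right_mono) simp
qed

lemma limsup_mono_vanishing_error:
  fixes f g e :: "nat \<Rightarrow> real"
  assumes "\<And>n. f n \<le> g n + e n" and "e \<longlonglongrightarrow> 0"
  shows "limsup (\<lambda>n. ereal (f n)) \<le> limsup (\<lambda>n. ereal (g n))"
proof -
  have "limsup (\<lambda>n. ereal (f n)) \<le> limsup (\<lambda>n. ereal (g n) + ereal (e n))"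
    using assms(1) by (intro Limsup_mono always_eventually) simp
  also have "\<dots> \<le> limsup (\<lambda>n. ereal (g n)) + limsup (\<lambda>n. ereal (e n))"
    by (rule ereal_limsup_add_mono)
  also have "limsup (\<lambda>n. ereal (e n)) = 0"
    using lim_imp_Limsup[OF _ tendsto_ereal[OF assms(2)]] by (simp add: zero_ereal_def)
  finally show ?thesis by simp
qed

lemma length_pref [simp]: "length (pref Y m) = m"
  by (simp add: pref_def)

lemma take_pref: "i \<le> m \<Longrightarrow> take i (pref Y m) = pref Y i"
  by (simp add: pref_def take_map)

lemma yes_count_pref: "yes_count l (pref Y m) = card {i \<in> yes_set l Y. i \<le> m}"
  unfolding yes_count_def yes_set_def by (rule arg_cong[where f = card]) (auto simp: take_pref)

lemma infinite_or_card_ge_iff: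
  fixes S :: "nat set"
  shows "(infinite S \<or> n \<le> card S) \<longleftrightarrow> (\<exists>m. n \<le> card {i \<in> S. i \<le> m})"
proof
  assume "infinite S \<or> n \<le> card S"
  then obtain F where F: "finite F" "F \<subseteq> S" "n \<le> card F"
    by (metis infinite_arbitrarily_large order_refl)
  have "F \<subseteq> {i \<in> S. i \<le> Max (insert 0 F)}" using F by auto
  then have "card F \<le> card {i \<in> S. i \<le> Max (insert 0 F)}" by (intro card_mono) auto
  then show "\<exists>m. n \<le> card {i \<in> S. i \<le> m}" using F(3) by (intro exI[of _ "Max (insert 0 F)"]) linarith
next
  assume "\<exists>m. n \<le> card {i \<in> S. i \<le> m}"
  then obtain m where m: "n \<le> card {i \<in> S. i \<le> m}" by blast
  show "infinite S \<or> n \<le> card S"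
  proof (cases "finite S")
    case True
    then have "card {i \<in> S. i \<le> m} \<le> card S" by (intro card_mono) auto
    then show ?thesis using m by simp
  qed simp
qed

lemma many_yes_eq_UN_pref:
  "many_yes l n = (\<Union>m. (\<lambda>Y. pref Y m) -` {w. n \<le> yes_count l w} \<inter> space lam)"
proof -
  have "Y \<in> many_yes l n \<longleftrightarrow> Y \<in> space lam \<and> (\<exists>m. n \<le> yes_count l (pref Y m))" for Y
    unfolding many_yes_def yes_count_pref using infinite_or_card_ge_iff[of "yes_set l Y" n] by simp
  then show ?thesis by blast
qed

lemma prob_space_lam: "prob_space lam"
  unfolding lam_def by (intro prob_space_PiM) (simp add: prob_space_measure_pmf)

lemma measurable_pref: "(\<lambda>Y. pref Y m) \<in> measurable lam (count_space UNIV)"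
proof (induction m)
  case 0
  then show ?case by (simp add: pref_def)
next
  case (Suc m)
  have "(\<lambda>Y. Y m) \<in> measurable lam (measure_pmf (bernoulli_pmf (1/2)))"
    unfolding lam_def by (rule measurable_component_singleton) simp
  moreover have "measurable lam (measure_pmf (bernoulli_pmf (1/2))) = measurable lam (count_space UNIV)"
    by (rule measurable_cong_sets) auto
  ultimately have "(\<lambda>Y. Y m) \<in> measurable lam (count_space UNIV)" by simp
  moreover have "(\<lambda>Y. pref Y (Suc m)) = (\<lambda>Y. pref Y m @ [Y m])"
    by (auto simp: pref_def)
  ultimately show ?case using Suc by simp
qed

lemma many_yes_sets: "many_yes l n \<in> sets lam"
  unfolding many_yes_eq_UN_pref
proof (intro sets.countable_UN' subsetI)
  fix A assume "A \<in> range (\<lambda>m. (\<lambda>Y. pref Y m) -` {w. n \<le> yes_count l w} \<inter> space lam)"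
  then obtain m where "A = (\<lambda>Y. pref Y m) -` {w. n \<le> yes_count l w} \<inter> space lam" by blast
  then show "A \<in> sets lam" using measurable_sets[OF measurable_pref, of "{w. n \<le> yes_count l w}" m] by simp
qed auto

lemma many_yes_merge_learners_subset:
  "many_yes (merge_learners l1 l2) (Suc n) \<subseteq> many_yes l1 (Suc (Suc n)) \<union> many_yes l2 (Suc (Suc n))"
proof
  fix Y assume "Y \<in> many_yes (merge_learners l1 l2) (Suc n)"
  then obtain m where "Y \<in> space lam" "Suc n \<le> yes_count (merge_learners l1 l2) (pref Y m)"
    unfolding many_yes_eq_UN_pref by blast
  then have "Suc (Suc n) \<le> yes_count l1 (pref Y m) \<or> Suc (Suc n) \<le> yes_count l2 (pref Y m)"
    unfolding yes_count_merge_learners max_yes_count_def by linarith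
  then show "Y \<in> many_yes l1 (Suc (Suc n)) \<union> many_yes l2 (Suc (Suc n))"
    unfolding many_yes_eq_UN_pref using \<open>Y \<in> space lam\<close> by blast
qed

lemma measure_condition_merge_learners:
  assumes "measure_condition l1" and "measure_condition l2"
  shows "measure_condition (merge_learners l1 l2)"
  unfolding measure_condition_iff_many_yes
proof
  fix n :: nat
  show "emeasure lam (many_yes (merge_learners l1 l2) n) \<le> ennreal ((1/2) ^ n)"
  proof (cases n)
    case 0
    then show ?thesis using prob_space.emeasure_le_1[OF prob_space_lam] by simp
  next
    case (Suc k)
    have "emeasure lam (many_yes (merge_learners l1 l2) n)
        \<le> emeasure lam (many_yes l1 (Suc n) \<union> many_yes l2 (Suc n))"
      using many_yes_merge_learners_subset Suc by (intro emeasure_mono) (auto intro: many_yes_sets)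
    also have "\<dots> \<le> emeasure lam (many_yes l1 (Suc n)) + emeasure lam (many_yes l2 (Suc n))"
      by (intro emeasure_subadditive many_yes_sets)
    also have "\<dots> \<le> ennreal ((1/2) ^ Suc n) + ennreal ((1/2) ^ Suc n)"
      using assms unfolding measure_condition_iff_many_yes by (intro add_mono) blast+
    also have "\<dots> = ennreal ((1/2) ^ n)"
      by (simp flip: ennreal_plus)
    finally show ?thesis .
  qed
qed

lemma s_learns_merge_learners:
  assumes "s_learns s l X" and "l = l1 \<or> l = l2"
    and "measure_condition l1" and "measure_condition l2"
  shows "s_learns s (merge_learners l1 l2) X"
proof -
  have "ereal (1 - s) \<le> limsup (\<lambda>n. ereal (AVG l (pref X n)))"
    using assms(1) by (simp add: s_learns_def)
  also have "\<dots> \<le> limsup (\<lambda>n. ereal (AVG (merge_learners l1 l2) (pref X n)))"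
    using AVG_le_AVG_merge_learners[OF assms(2), of "pref X _"]
    by (intro limsup_mono_vanishing_error[OF _ lim_1_over_n]) simp
  finally show ?thesis
    using measure_condition_merge_learners[OF assms(3,4)] by (simp add: s_learns_def)
qed

theorem mainTheorem4:
  fixes s :: real and \<Gamma>1 \<Gamma>2 :: "(nat \<Rightarrow> bool) set" and l1 l2 :: learning_function
  assumes "s \<ge> 0"
    and "\<forall>X\<in>\<Gamma>1. s_learns s l1 X"
    and "\<forall>X\<in>\<Gamma>2. s_learns s l2 X"
  shows "\<exists>l3 :: learning_function. \<forall>X\<in>\<Gamma>1 \<union> \<Gamma>2. s_learns s l3 X"
proof (cases "\<Gamma>1 = {} \<or> \<Gamma>2 = {}")
  case True
  then show ?thesis using assms by auto
next
  case False
  then have "measure_condition l1" "measure_condition l2"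
    using assms(2,3) unfolding s_learns_def by auto
  then have "\<forall>X\<in>\<Gamma>1 \<union> \<Gamma>2. s_learns s (merge_learners l1 l2) X"
    using assms(2,3) s_learns_merge_learners by blast
  then show ?thesis by blast
qed

end
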